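(* Let $\mathbf P=(P,\leq,{}',0,1)$ be an orthogonal poset which is a Boolean poset, where the antitone involution ${}'$ is the complementation of $P$ (i.e. $x'$ is the complement of $x$ for each $x\in P$). Then $\mathbf P$ is an orthomodular poset, i.e. for all $x,y\in P$ with $x\leq y$ we have $x\vee(y\wedge x')=y$.
   Context: For a subset $A$ of a poset $(P,\le)$, $L(A)=\{z\in P: z\le a \text{ for all } a\in A\}$ and $U(A)=\{z\in P: a\le z \text{ for all } a\in A\}$; we write $L(x,y)$ for $L(\{x,y\})$, $LU(A)$ for $L(U(A))$, $L(A,z)$ for $L(A\cup\{z\})$, etc. A bounded poset $(P,\le,{}',0,1)$ with an antitone involution means ${}'$ satisfies $x\le y\Rightarrow y'\le x'$ and $x''=x$. Elements $x,y$ are orthogonal, $x\perp y$, if $x\le y'$. The poset is orthogonal if $x\vee y$ (supremum) exists whenever $x\perp y$. An element $y$ is a complement of $x$ if $L(x,y)=L(P)$ and $U(x,y)=U(P)$; the poset is complemented if every element has a complement. The poset is distributive if $L(U(x,y),z)=LU(L(x,z),L(y,z))$ for all $x,y,z$ (equivalently any of the dual LU-identities), and Boolean if it is distributive and complemented. An orthomodular poset is an orthogonal poset satisfying: $x\le y$ implies $x\vee(y\wedge x')=y$ (here $y\wedge x'=(y'\vee x)'$ exists by orthogonality). *)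

theory Defs
  imports Main
begin

text \<open>Posets are represented as types of class order; the whole type is the carrier P.\<close>

definition Lb :: "'a::order set \<Rightarrow> 'a set" where
  "Lb A = {z. \<forall>a\<in>A. z \<le> a}"

definition Ub :: "'a::order set \<Rightarrow> 'a set" where
  "Ub A = {z. \<forall>a\<in>A. a \<le> z}"

definition is_sup :: "'a::order \<Rightarrow> 'a \<Rightarrow> 'a \<Rightarrow> bool" where
  "is_sup x y s \<longleftrightarrow> x \<le> s \<and> y \<le> s \<and> (\<forall>u. x \<le> u \<and> y \<le> u \<longrightarrow> s \<le> u)"

definition is_inf :: "'a::order \<Rightarrow> 'a \<Rightarrow> 'a \<Rightarrow> bool" where
  "is_inf x y m \<longleftrightarrow> m \<le> x \<and> m \<le> y \<and> (\<forall>u. u \<le> x \<and> u \<le> y \<longrightarrow> u \<le> m)"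

definition bounded_poset_ai :: "('a::order \<Rightarrow> 'a) \<Rightarrow> 'a \<Rightarrow> 'a \<Rightarrow> bool" where
  "bounded_poset_ai c z t \<longleftrightarrow> (\<forall>x. z \<le> x \<and> x \<le> t)
     \<and> (\<forall>x y. x \<le> y \<longrightarrow> c y \<le> c x) \<and> (\<forall>x. c (c x) = x)"

definition orthogonal_poset :: "('a::order \<Rightarrow> 'a) \<Rightarrow> 'a \<Rightarrow> 'a \<Rightarrow> bool" where
  "orthogonal_poset c z t \<longleftrightarrow> bounded_poset_ai c z t
     \<and> (\<forall>x y. x \<le> c y \<longrightarrow> (\<exists>s. is_sup x y s))"

definition is_complement :: "'a::order \<Rightarrow> 'a \<Rightarrow> bool" where
  "is_complement x y \<longleftrightarrow> Lb {x, y} = Lb UNIV \<and> Ub {x, y} = Ub UNIV"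

definition complemented_poset :: "'a::order itself \<Rightarrow> bool" where
  "complemented_poset _ \<longleftrightarrow> (\<forall>x::'a. \<exists>y. is_complement x y)"

definition distributive_poset :: "'a::order itself \<Rightarrow> bool" where
  "distributive_poset _ \<longleftrightarrow> (\<forall>x y z::'a.
     Lb (Ub {x, y} \<union> {z}) = Lb (Ub (Lb {x, z} \<union> Lb {y, z})))"

definition boolean_poset :: "'a::order itself \<Rightarrow> bool" where
  "boolean_poset T \<longleftrightarrow> distributive_poset T \<and> complemented_poset T"

definition orthomodular_poset :: "('a::order \<Rightarrow> 'a) \<Rightarrow> 'a \<Rightarrow> 'a \<Rightarrow> bool" where
  "orthomodular_poset c z t \<longleftrightarrow> orthogonal_poset c z t
     \<and> (\<forall>x y. x \<le> y \<longrightarrow> (\<exists>m. is_inf y (c x) m \<and> is_sup x m y))"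

end

theory Submission
  imports Defs
begin

text \<open>For \<open>x \<le> y\<close> the infimum \<open>m = y \<and> x'\<close> exists by orthogonality and De Morgan, and so does
  \<open>w = x \<or> m\<close>. Distributivity applied to \<open>y\<close> and the complementary pair
  \<open>x, x'\<close> gives \<open>L(y) = LU(L(x,y), L(x',y)) = LU(x, m) = L(w)\<close>, hence \<open>w = y\<close>.\<close>

lemma Lb_singleton_inject:
  fixes a b :: "'a::order"
  assumes "Lb {a} = Lb {b}"
  shows "a = b"
proof (rule order_antisym)
  have "a \<in> Lb {b}" and "b \<in> Lb {a}"
    using assms unfolding Lb_def by auto
  then show "a \<le> b" and "b \<le> a"
    unfolding Lb_def by auto
qed

lemma Lb_Ub_singleton: "Lb (Ub {a}) = Lb {a::'a::order}"
  unfolding Lb_def Ub_def by (auto intro: order_trans)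

lemma Lb_Ub_UNIV_insert: "Lb (Ub UNIV \<union> {y}) = Lb {y::'a::order}"
  unfolding Lb_def Ub_def by (auto intro: order_trans)

lemma Ub_Lb_union_singletons: "Ub (Lb {a} \<union> Lb {b}) = Ub {a, b::'a::order}"
  unfolding Lb_def Ub_def by (auto intro: order_trans)

lemma is_inf_Lb_eq: "is_inf a b m \<Longrightarrow> Lb {a, b} = Lb {m}"
  unfolding is_inf_def Lb_def by (auto intro: order_trans)

lemma is_sup_Ub_eq: "is_sup a b s \<Longrightarrow> Ub {a, b} = Ub {s}"
  unfolding is_sup_def Ub_def by (auto intro: order_trans)

lemma is_inf_compl_sup:
  assumes "antimono c" and "\<And>x. c (c x) = x"
    and "is_sup (c a) (c b) s"
  shows "is_inf a b (c s)"
  unfolding is_inf_def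
proof (intro conjI allI impI)
  have "c a \<le> s" and "c b \<le> s"
    using assms(3) unfolding is_sup_def by auto
  then show "c s \<le> a" and "c s \<le> b"
    using antimonoD[OF assms(1)] assms(2) by metis+
next
  fix u
  assume "u \<le> a \<and> u \<le> b"
  then have "c a \<le> c u" and "c b \<le> c u"
    using antimonoD[OF assms(1)] by auto
  then have "s \<le> c u"
    using assms(3) unfolding is_sup_def by blast
  then show "u \<le> c s"
    using antimonoD[OF assms(1)] assms(2) by metis
qed

lemma distributive_sup_infs_eq:
  fixes a b y :: "'a::order"
  assumes "distributive_poset TYPE('a)" and "Ub {a, b} = Ub UNIV"
    and "is_inf a y p" and "is_inf b y q" and "is_sup p q w"
  shows "w = y"
proof (rule Lb_singleton_inject)
  have "Lb {y} = Lb (Ub {a, b} \<union> {y})"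
    unfolding assms(2) by (rule Lb_Ub_UNIV_insert[symmetric])
  also have "\<dots> = Lb (Ub (Lb {a, y} \<union> Lb {b, y}))"
    using assms(1) unfolding distributive_poset_def by blast
  also have "\<dots> = Lb (Ub {p, q})"
    using assms(3,4) by (simp add: is_inf_Lb_eq Ub_Lb_union_singletons)
  also have "\<dots> = Lb {w}"
    using assms(5) by (simp add: is_sup_Ub_eq Lb_Ub_singleton)
  finally show "Lb {w} = Lb {y}" by simp
qed

lemma orthogonal_poset_inf_compl:
  assumes "orthogonal_poset c z t" and "x \<le> y"
  obtains m where "is_inf y (c x) m" and "x \<le> c m"
proof -
  have anti: "antimono c" and inv: "\<And>x. c (c x) = x"
    using assms(1) unfolding orthogonal_poset_def bounded_poset_ai_def antimono_def by auto
  have "c y \<le> c x"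
    using anti assms(2) by (rule antimonoD)
  then obtain s where s: "is_sup (c y) (c (c x)) s"
    using assms(1) unfolding orthogonal_poset_def inv by blast
  show thesis
  proof
    show "is_inf y (c x) (c s)"
      using anti inv s by (rule is_inf_compl_sup)
    show "x \<le> c (c s)"
      using s unfolding is_sup_def inv by blast
  qed
qed

theorem lemma1:
  fixes c :: "'a::order \<Rightarrow> 'a" and z t :: 'a
  assumes "orthogonal_poset c z t"
    and "boolean_poset TYPE('a)"
    and "\<forall>x. is_complement x (c x)"
  shows "orthomodular_poset c z t"
  unfolding orthomodular_poset_def
proof (intro conjI allI impI assms(1))
  fix x y :: 'a
  assume "x \<le> y"
  with assms(1) obtain m where m: "is_inf y (c x) m" and "x \<le> c m"
    by (rule orthogonal_poset_inf_compl)
  then obtain w where w: "is_sup x m w"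
    using assms(1) unfolding orthogonal_poset_def by blast
  have "w = y"
  proof (rule distributive_sup_infs_eq)
    show "distributive_poset TYPE('a)"
      using assms(2) unfolding boolean_poset_def by blast
    show "Ub {x, c x} = Ub UNIV"
      using assms(3) unfolding is_complement_def by blast
    show "is_inf x y x"
      using \<open>x \<le> y\<close> unfolding is_inf_def by simp
    show "is_inf (c x) y m"
      using m unfolding is_inf_def by blast
  qed (rule w)
  with m w show "\<exists>m. is_inf y (c x) m \<and> is_sup x m y" by blast
qed

end
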